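(* Let $L$ and $M$ be Euclidean lattices normalized so that $\mu_{\max}(L)=\mu_{\max}(M)=0$, and let $\alpha\in L\otimes M$. Then $|\alpha|\ge \sqrt{l(\alpha)}$.
   Context: A Euclidean lattice $L$ of rank $n$ is a discrete subgroup of rank $n$ spanning an $n$-dimensional real inner product space $L_{\mathbb{R}}$; $\deg(L)=-\log\mathrm{vol}(L_{\mathbb{R}}/L)$, $\mu(L)=\deg(L)/\operatorname{rk}(L)$. A sublattice is a subgroup with the induced inner product on its real span. $\mu_{\max}(M)=\max\{\mu(S): S\subseteq M \text{ a nonzero sublattice}\}$. The lattice $L\otimes M\subset L_{\mathbb{R}}\otimes M_{\mathbb{R}}$ has inner product $(v\otimes w,v'\otimes w')=(v,v')(w,w')$, and $|\alpha|$ denotes the norm. The length $l(\alpha)$ of $\alpha\in L\otimes M$ is the minimal integer $l\ge 0$ such that $\alpha=\sum_{k=1}^{l}u_k\otimes u_k'$ with $u_k\in L$, $u_k'\in M$. *)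

theory Defs
  imports "HOL-Analysis.Analysis"
begin

text \<open>Euclidean lattices are modelled inside a Euclidean space (every finite-dimensional
real inner product space is isometric to some such space). A Euclidean lattice is a
discrete additive subgroup; its real span with the induced inner product is L_R.\<close>

definition add_subgroup :: "'a::real_vector set \<Rightarrow> bool" where
  "add_subgroup L \<longleftrightarrow> 0 \<in> L \<and> (\<forall>x\<in>L. \<forall>y\<in>L. x - y \<in> L)"

definition discrete_set :: "'a::metric_space set \<Rightarrow> bool" where
  "discrete_set L \<longleftrightarrow> (\<forall>x\<in>L. \<exists>e>0. \<forall>y\<in>L. dist y x < e \<longrightarrow> y = x)"

definition euclidean_lattice :: "'a::euclidean_space set \<Rightarrow> bool" where
  "euclidean_lattice L \<longleftrightarrow> add_subgroup L \<and> discrete_set L"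

definition sublattice :: "'a::euclidean_space set \<Rightarrow> 'a set \<Rightarrow> bool" where
  "sublattice S L \<longleftrightarrow> S \<subseteq> L \<and> add_subgroup S"

definition rk :: "'a::euclidean_space set \<Rightarrow> nat" where
  "rk L = dim (span L)"

definition lattice_basis :: "'a::euclidean_space set \<Rightarrow> 'a list \<Rightarrow> bool" where
  "lattice_basis L bs \<longleftrightarrow> distinct bs \<and> independent (set bs) \<and>
     L = {(\<Sum>i<length bs. of_int (c i) *\<^sub>R bs ! i) | c. True}"

definition gram_det :: "'a::real_inner list \<Rightarrow> real" where
  "gram_det bs = (\<Sum>p | p permutes {..<length bs}.
      of_int (sign p) * (\<Prod>i<length bs. inner (bs ! i) (bs ! (p i))))"

text \<open>vol(L_R / L) = sqrt of the Gram determinant of any lattice basis.\<close>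
definition covol :: "'a::euclidean_space set \<Rightarrow> real" where
  "covol L = sqrt (gram_det (SOME bs. lattice_basis L bs))"

definition deg :: "'a::euclidean_space set \<Rightarrow> real" where
  "deg L = - ln (covol L)"

definition slope :: "'a::euclidean_space set \<Rightarrow> real" where
  "slope L = deg L / real (rk L)"

definition mu_max :: "'a::euclidean_space set \<Rightarrow> real" where
  "mu_max M = Sup {slope S | S. sublattice S M \<and> S \<noteq> {0}}"

text \<open>Tensor product: L_R \<otimes> M_R realized inside real^'m^'n (outer products) with the
Frobenius inner product, so (v\<otimes>w, v'\<otimes>w') = (v,v')(w,w').\<close>
definition tensor :: "real^'n::finite \<Rightarrow> real^'m::finite \<Rightarrow> real^'m^'n" where
  "tensor v w = (\<chi> i j. v $ i * w $ j)"

definition lattice_tensor :: "(real^'n::finite) set \<Rightarrow> (real^'m::finite) set \<Rightarrow> (real^'m^'n) set" where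
  "lattice_tensor L M = {(\<Sum>k<l. tensor (u k) (u' k)) | (l::nat) u u'. \<forall>k<l. u k \<in> L \<and> u' k \<in> M}"

definition tensor_length :: "(real^'n::finite) set \<Rightarrow> (real^'m::finite) set \<Rightarrow> real^'m^'n \<Rightarrow> nat" where
  "tensor_length L M \<alpha> = (LEAST l::nat. \<exists>u u'. (\<forall>k<l. u k \<in> L \<and> u' k \<in> M) \<and>
       \<alpha> = (\<Sum>k<l. tensor (u k) (u' k)))"

end

theory Submission
  imports Defs "Jordan_Normal_Form.Determinant"
begin

text \<open>Take a representation \<open>\<alpha> = \<Sum>\<^sub>k u\<^sub>k \<otimes> u'\<^sub>k\<close> with the minimal number \<open>l\<close> of terms. Both families are then
  linearly independent: otherwise the \<open>u\<^sub>k\<close> could be rewritten through a basis of the lattice they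
  generate, whose rank is smaller than \<open>l\<close>. As \<open>\<mu>\<^sub>m\<^sub>a\<^sub>x = 0\<close>, the sublattices spanned by the \<open>u\<^sub>k\<close>
  and by the \<open>u'\<^sub>k\<close> have covolume at least 1, i.e. Gram determinant at least 1. Replacing the \<open>u\<^sub>k\<close>
  by their Gram--Schmidt vectors \<open>g\<^sub>k\<close> (a unimodular triangular change of basis, transferred to the
  right factors) gives \<open>\<alpha> = \<Sum>\<^sub>k g\<^sub>k \<otimes> w\<^sub>k\<close> with orthogonal \<open>g\<^sub>k\<close>, so
  \<open>|\<alpha>|\<^sup>2 = \<Sum>\<^sub>k |g\<^sub>k|\<^sup>2 |w\<^sub>k|\<^sup>2\<close>. Here \<open>\<Prod>\<^sub>k |g\<^sub>k|\<^sup>2\<close> is the Gram determinant of the \<open>u\<^sub>k\<close> and, by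
  Hadamard's inequality, \<open>\<Prod>\<^sub>k |w\<^sub>k|\<^sup>2\<close> bounds that of the \<open>u'\<^sub>k\<close>; AM--GM yields \<open>|\<alpha>|\<^sup>2 \<ge> l\<close>.

  Since \<open>\<mu>\<^sub>m\<^sub>a\<^sub>x\<close> is a supremum of reals, it only controls the slopes once these are bounded above;
  this follows from a lower bound on the Gram determinant of lattice bases built from shortest
  vectors.\<close>

section \<open>Gram determinants\<close>

definition gram_mat :: "'a::real_inner list \<Rightarrow> real Matrix.mat" where
  "gram_mat bs = Matrix.mat (length bs) (length bs) (\<lambda>(i, j). inner (bs ! i) (bs ! j))"

lemma gram_mat_carrier: "gram_mat bs \<in> carrier_mat (length bs) (length bs)"
  by (simp add: gram_mat_def)

lemma gram_det_eq_det_gram_mat: "gram_det bs = Determinant.det (gram_mat bs)"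
  unfolding gram_det_def Determinant.det_def gram_mat_def by (simp add: atLeast0LessThan)

definition lincombs :: "real Matrix.mat \<Rightarrow> 'a::real_vector list \<Rightarrow> 'a list" where
  "lincombs T bs = map (\<lambda>i. \<Sum>j<length bs. T $$ (i, j) *\<^sub>R bs ! j) [0..<dim_row T]"

lemma length_lincombs [simp]: "length (lincombs T bs) = dim_row T"
  by (simp add: lincombs_def)

lemma nth_lincombs: "i < dim_row T \<Longrightarrow> lincombs T bs ! i = (\<Sum>j<length bs. T $$ (i, j) *\<^sub>R bs ! j)"
  by (simp add: lincombs_def)

lemma lincombs_mult:
  assumes A: "A \<in> carrier_mat m n" and B: "B \<in> carrier_mat n k" and bs: "length bs = k"
  shows "lincombs A (lincombs B bs) = lincombs (A * B) bs"
proof (rule nth_equalityI)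
  fix i assume "i < length (lincombs A (lincombs B bs))"
  then have i: "i < m" using A by simp
  have "lincombs A (lincombs B bs) ! i = (\<Sum>j<n. A $$ (i, j) *\<^sub>R (\<Sum>l<k. B $$ (j, l) *\<^sub>R bs ! l))"
    using i A B bs by (simp add: nth_lincombs)
  also have "\<dots> = (\<Sum>l<k. (\<Sum>j<n. A $$ (i, j) * B $$ (j, l)) *\<^sub>R bs ! l)"
    by (simp add: scaleR_sum_right scaleR_sum_left sum.swap[of _ "{..<n}"])
  also have "\<dots> = lincombs (A * B) bs ! i"
    using i A B bs by (simp add: nth_lincombs scalar_prod_def atLeast0LessThan)
  finally show "lincombs A (lincombs B bs) ! i = lincombs (A * B) bs ! i" .
qed (use A B in simp)

lemma gram_mat_lincombs:
  assumes T: "T \<in> carrier_mat m n" and bs: "length (bs :: 'a::real_inner list) = n"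
  shows "gram_mat (lincombs T bs) = T * gram_mat bs * transpose_mat T"
proof (rule eq_matI)
  fix i j assume "i < dim_row (T * gram_mat bs * transpose_mat T)" "j < dim_col (T * gram_mat bs * transpose_mat T)"
  then have i: "i < m" and j: "j < m" using T by auto
  have "gram_mat (lincombs T bs) $$ (i, j) =
      inner (\<Sum>k<n. T $$ (i, k) *\<^sub>R bs ! k) (\<Sum>l<n. T $$ (j, l) *\<^sub>R bs ! l)"
    using i j T bs by (simp add: gram_mat_def nth_lincombs)
  also have "\<dots> = (\<Sum>l<n. (\<Sum>k<n. T $$ (i, k) * inner (bs ! k) (bs ! l)) * T $$ (j, l))"
    unfolding inner_sum_left inner_sum_right sum_distrib_right by (simp add: mult_ac)
  also have "\<dots> = (T * gram_mat bs * transpose_mat T) $$ (i, j)"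
    using i j T bs by (simp add: gram_mat_def scalar_prod_def atLeast0LessThan)
  finally show "gram_mat (lincombs T bs) $$ (i, j) = (T * gram_mat bs * transpose_mat T) $$ (i, j)" .
qed (use T bs in \<open>auto simp: gram_mat_def\<close>)

lemma gram_det_lincombs:
  assumes T: "T \<in> carrier_mat n n" and bs: "length (bs :: 'a::real_inner list) = n"
  shows "gram_det (lincombs T bs) = (Determinant.det T)\<^sup>2 * gram_det bs"
  using T gram_mat_carrier[of bs] bs
  by (simp add: gram_det_eq_det_gram_mat gram_mat_lincombs det_mult[of _ n] det_transpose
      power2_eq_square)

lemma gram_det_pairwise_orthogonal:
  assumes orth: "\<And>i j. i < length ds \<Longrightarrow> j < length ds \<Longrightarrow> i \<noteq> j \<Longrightarrow> inner (ds ! i) (ds ! j) = 0"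
  shows "gram_det ds = (\<Prod>k<length ds. (norm (ds ! k))\<^sup>2)"
proof -
  have "Determinant.det (gram_mat ds) = prod_list (diag_mat (gram_mat ds))"
    by (rule det_lower_triangular[OF _ gram_mat_carrier]) (use orth in \<open>auto simp: gram_mat_def\<close>)
  then show ?thesis
    by (simp add: gram_det_eq_det_gram_mat prod_list_diag_prod gram_mat_def atLeast0LessThan
        power2_norm_eq_inner)
qed

lemma span_image_sum_coeffs:
  assumes "finite I" "x \<in> span (f ` I)"
  shows "\<exists>c. x = (\<Sum>i\<in>I. c i *\<^sub>R f i)"
  using assms
proof (induction I arbitrary: x rule: finite_induct)
  case empty then show ?case by simp
next
  case (insert i I)
  from insert.prems obtain k where "x - k *\<^sub>R f i \<in> span (f ` I)"
    by (auto simp: span_breakdown_eq)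
  then obtain c where c: "x - k *\<^sub>R f i = (\<Sum>j\<in>I. c j *\<^sub>R f j)"
    using insert.IH by blast
  have "(\<Sum>j\<in>I. (c(i := k)) j *\<^sub>R f j) = (\<Sum>j\<in>I. c j *\<^sub>R f j)"
    using insert.hyps by (intro sum.cong) auto
  then have "x = (\<Sum>j\<in>insert i I. (c(i := k)) j *\<^sub>R f j)"
    using insert.hyps c by (simp add: algebra_simps)
  then show ?case by blast
qed

lemma set_take_eq_image_nth: "k \<le> length xs \<Longrightarrow> set (take k xs) = (!) xs ` {..<k}"
  by (metis atLeast0LessThan list.set_map map_nth set_upt take_map take_upt add_0 le_refl)

lemma lincombs_unitriangular_exists:
  assumes len: "length ds = n" "length bs = n"
    and tri: "\<And>k. k < n \<Longrightarrow> bs ! k - ds ! k \<in> span (set (take k ds))"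
  obtains T where "T \<in> carrier_mat n n" "Determinant.det T = 1" "lincombs T ds = bs"
proof -
  have "\<exists>c. bs ! k - ds ! k = (\<Sum>i<k. c i *\<^sub>R ds ! i)" if k: "k < n" for k
    using span_image_sum_coeffs[of "{..<k}" _ "(!) ds"] tri[OF k] set_take_eq_image_nth[of k ds] k len
    by auto
  then obtain c where c: "\<And>k. k < n \<Longrightarrow> bs ! k - ds ! k = (\<Sum>i<k. c k i *\<^sub>R ds ! i)"
    by metis
  define T where "T = Matrix.mat n n (\<lambda>(k, i). if i = k then 1 else if i < k then c k i else 0)"
  have T: "T \<in> carrier_mat n n" by (simp add: T_def)
  have "Determinant.det T = 1"
    by (subst det_lower_triangular[OF _ T]) (auto simp: T_def prod_list_diag_prod)
  moreover have "lincombs T ds = bs"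
  proof (rule nth_equalityI)
    fix k assume "k < length (lincombs T ds)"
    then have k: "k < n" using T by simp
    have "lincombs T ds ! k = (\<Sum>i<n. (if i = k then ds ! i else 0) + (if i < k then c k i *\<^sub>R ds ! i else 0))"
      using k T len by (auto simp: nth_lincombs T_def intro: sum.cong)
    also have "\<dots> = ds ! k + (\<Sum>i<k. c k i *\<^sub>R ds ! i)"
      using k by (simp add: sum.distrib sum.If_cases lessThan_def Collect_conj_eq[symmetric])
      (metis (lifting) less_trans)
    also have "\<dots> = bs ! k" using c[OF k] by (simp add: algebra_simps)
    finally show "lincombs T ds ! k = bs ! k" .
  qed (use T len in simp)
  ultimately show thesis using T that by blast
qed

lemma gram_det_unitriangular:
  assumes "length ds = length bs"
    and "\<And>k. k < length bs \<Longrightarrow> bs ! k - ds ! k \<in> span (set (take k ds))"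
  shows "gram_det bs = gram_det (ds :: 'a::real_inner list)"
proof -
  obtain T where "T \<in> carrier_mat (length bs) (length bs)" "Determinant.det T = 1" "lincombs T ds = bs"
    using lincombs_unitriangular_exists[OF assms(1) refl assms(2)] by blast
  then show ?thesis using gram_det_lincombs[of T "length bs" ds] assms(1) by simp
qed

section \<open>Gram--Schmidt orthogonalisation\<close>

definition perp_component :: "'a::euclidean_space set \<Rightarrow> 'a \<Rightarrow> 'a" where
  "perp_component S x = (SOME z. x - z \<in> span S \<and> (\<forall>w\<in>span S. Linear_Algebra.orthogonal z w))"

lemma perp_component_spec:
  "x - perp_component S x \<in> span S \<and> (\<forall>w\<in>span S. Linear_Algebra.orthogonal (perp_component S x) w)"
proof -
  have "\<exists>z. x - z \<in> span S \<and> (\<forall>w\<in>span S. Linear_Algebra.orthogonal z w)"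
    by (rule orthogonal_subspace_decomp_exists[of S x]) (metis add_diff_cancel_right')
  then show ?thesis unfolding perp_component_def by (rule someI_ex)
qed

definition gram_schmidt :: "'a::euclidean_space list \<Rightarrow> nat \<Rightarrow> 'a" where
  "gram_schmidt bs k = perp_component (set (take k bs)) (bs ! k)"

lemma gram_schmidt_diff_in_span: "bs ! k - gram_schmidt bs k \<in> span (set (take k bs))"
  unfolding gram_schmidt_def using perp_component_spec by blast

lemma orthogonal_gram_schmidt:
  "w \<in> span (set (take k bs)) \<Longrightarrow> Linear_Algebra.orthogonal (gram_schmidt bs k) w"
  unfolding gram_schmidt_def using perp_component_spec by blast

lemma gram_schmidt_in_span:
  assumes "k < length bs" shows "gram_schmidt bs k \<in> span (set (take (Suc k) bs))"
proof -
  have "set (take (Suc k) bs) = insert (bs ! k) (set (take k bs))"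
    using assms by (simp add: take_Suc_conv_app_nth)
  then have "bs ! k \<in> span (set (take (Suc k) bs))"
    and "bs ! k - gram_schmidt bs k \<in> span (set (take (Suc k) bs))"
    using gram_schmidt_diff_in_span[of bs k] span_mono[of "set (take k bs)" "set (take (Suc k) bs)"]
    by (auto intro: span_base)
  from span_diff[OF this] show ?thesis by simp
qed

lemma span_insert_eq_if_diff_in_span:
  assumes "x - y \<in> span A" shows "span (insert x A) = span (insert y A)"
proof -
  have "z - k *\<^sub>R x \<in> span A \<longleftrightarrow> z - k *\<^sub>R y \<in> span A" for z k
  proof -
    have "z - k *\<^sub>R y = (z - k *\<^sub>R x) + k *\<^sub>R (x - y)" by (simp add: algebra_simps)
    then show ?thesis by (metis span_add_eq2 span_scale assms)
  qed
  then show ?thesis by (auto simp: span_breakdown_eq)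
qed

lemma span_take_eq_span_gram_schmidt:
  "k \<le> length bs \<Longrightarrow> span (set (take k bs)) = span (gram_schmidt bs ` {..<k})"
proof (induction k)
  case (Suc k)
  then have "span (set (take (Suc k) bs)) = span (insert (bs ! k) (set (take k bs)))"
    by (simp add: take_Suc_conv_app_nth)
  also have "\<dots> = span (insert (gram_schmidt bs k) (set (take k bs)))"
    by (rule span_insert_eq_if_diff_in_span[OF gram_schmidt_diff_in_span])
  also have "\<dots> = span (insert (gram_schmidt bs k) (gram_schmidt bs ` {..<k}))"
    using Suc by (simp add: span_insert)
  finally show ?case by (simp add: lessThan_Suc)
qed simp

lemma inner_gram_schmidt_eq_0:
  assumes "i < length bs" "j < length bs" "i \<noteq> j"
  shows "inner (gram_schmidt bs i) (gram_schmidt bs j) = 0"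
proof -
  have *: "inner (gram_schmidt bs k) (gram_schmidt bs i) = 0" if "i < k" "k < length bs" for i k
  proof -
    have "span (set (take (Suc i) bs)) \<subseteq> span (set (take k bs))"
      by (intro span_mono set_take_subset_set_take) (use that in simp)
    then have "gram_schmidt bs i \<in> span (set (take k bs))"
      using gram_schmidt_in_span[of i bs] that by auto
    then show ?thesis using orthogonal_gram_schmidt by (simp add: Linear_Algebra.orthogonal_def)
  qed
  show ?thesis
    using assms *[of j i] *[of i j] by (cases "i < j") (auto simp: inner_commute)
qed

lemma gram_schmidt_eq_0_iff: "gram_schmidt bs k = 0 \<longleftrightarrow> bs ! k \<in> span (set (take k bs))"
proof
  assume "bs ! k \<in> span (set (take k bs))"
  from span_diff[OF this gram_schmidt_diff_in_span] have "gram_schmidt bs k \<in> span (set (take k bs))"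
    by simp
  then show "gram_schmidt bs k = 0"
    using orthogonal_gram_schmidt[of "gram_schmidt bs k" k bs]
    by (simp add: Linear_Algebra.orthogonal_def)
qed (use gram_schmidt_diff_in_span[of bs k] in simp)

lemma norm_gram_schmidt_le: "norm (gram_schmidt bs k) \<le> norm (bs ! k)"
proof -
  have "Linear_Algebra.orthogonal (bs ! k - gram_schmidt bs k) (gram_schmidt bs k)"
    using orthogonal_gram_schmidt[OF gram_schmidt_diff_in_span] by (simp add: orthogonal_commute)
  then have "(norm (bs ! k))\<^sup>2 = (norm (bs ! k - gram_schmidt bs k))\<^sup>2 + (norm (gram_schmidt bs k))\<^sup>2"
    using norm_add_Pythagorean[of "bs ! k - gram_schmidt bs k" "gram_schmidt bs k"] by simp
  then have "(norm (gram_schmidt bs k))\<^sup>2 \<le> (norm (bs ! k))\<^sup>2" by simp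
  then show ?thesis by (rule power2_le_imp_le) simp
qed

lemma gram_schmidt_unitriangular:
  obtains T where "T \<in> carrier_mat (length bs) (length bs)" "Determinant.det T = 1"
    "lincombs T (map (gram_schmidt bs) [0..<length bs]) = bs"
proof (rule lincombs_unitriangular_exists)
  let ?ds = "map (gram_schmidt bs) [0..<length bs]"
  fix k assume k: "k < length bs"
  then have "set (take k ?ds) = gram_schmidt bs ` {..<k}"
    by (simp add: take_map atLeast0LessThan min_def)
  then show "bs ! k - ?ds ! k \<in> span (set (take k ?ds))"
    using gram_schmidt_diff_in_span[of bs k] span_take_eq_span_gram_schmidt[of k bs] k by simp
qed simp_all

lemma gram_det_eq_prod_gram_schmidt:
  "gram_det bs = (\<Prod>k<length bs. (norm (gram_schmidt bs k))\<^sup>2)"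
proof -
  let ?ds = "map (gram_schmidt bs) [0..<length bs]"
  obtain T where "T \<in> carrier_mat (length bs) (length bs)" "Determinant.det T = 1" "lincombs T ?ds = bs"
    by (rule gram_schmidt_unitriangular)
  then have "gram_det (lincombs T ?ds) = gram_det ?ds"
    using gram_det_lincombs[of T "length bs" ?ds] by simp
  then have "gram_det bs = gram_det ?ds" using \<open>lincombs T ?ds = bs\<close> by simp
  also have "\<dots> = (\<Prod>k<length bs. (norm (gram_schmidt bs k))\<^sup>2)"
    by (subst gram_det_pairwise_orthogonal) (auto simp: inner_gram_schmidt_eq_0)
  finally show ?thesis .
qed

lemma gram_det_nonneg: "gram_det (bs :: 'a::euclidean_space list) \<ge> 0"
  by (simp add: gram_det_eq_prod_gram_schmidt prod_nonneg)

lemma gram_det_le_prod_norm: "gram_det (bs :: 'a::euclidean_space list) \<le> (\<Prod>k<length bs. (norm (bs ! k))\<^sup>2)"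
  unfolding gram_det_eq_prod_gram_schmidt
  by (intro prod_mono) (simp add: norm_gram_schmidt_le power_mono)

lemma distinct_independent_iff_not_in_span_take:
  "distinct bs \<and> independent (set bs) \<longleftrightarrow> (\<forall>k<length bs. bs ! k \<notin> span (set (take k bs)))"
proof (induction bs rule: rev_induct)
  case (snoc x bs)
  have "(\<forall>k<length (bs @ [x]). (bs @ [x]) ! k \<notin> span (set (take k (bs @ [x])))) \<longleftrightarrow>
      (\<forall>k<length bs. bs ! k \<notin> span (set (take k bs))) \<and> x \<notin> span (set bs)"
    by (auto simp: nth_append less_Suc_eq)
  then show ?case
    using snoc.IH span_base[of x "set bs"] by (auto simp: independent_insert)
qed (simp add: independent_empty)

lemma gram_det_pos_iff: "gram_det (bs :: 'a::euclidean_space list) > 0 \<longleftrightarrow> distinct bs \<and> independent (set bs)"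
proof -
  have "gram_det bs \<noteq> 0 \<longleftrightarrow> (\<forall>k<length bs. gram_schmidt bs k \<noteq> 0)"
    by (simp add: gram_det_eq_prod_gram_schmidt Ball_def)
  then show ?thesis using gram_det_nonneg[of bs]
    by (simp add: gram_schmidt_eq_0_iff distinct_independent_iff_not_in_span_take less_le)
qed

section \<open>Integral spans and lattice bases\<close>

lemma add_subgroup_0: "add_subgroup S \<Longrightarrow> 0 \<in> S"
  by (simp add: add_subgroup_def)

lemma add_subgroup_diff: "add_subgroup S \<Longrightarrow> x \<in> S \<Longrightarrow> y \<in> S \<Longrightarrow> x - y \<in> S"
  by (simp add: add_subgroup_def)

lemma add_subgroup_uminus: "add_subgroup S \<Longrightarrow> x \<in> S \<Longrightarrow> - x \<in> S"
  using add_subgroup_diff[of S 0 x] by (simp add: add_subgroup_0)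

lemma add_subgroup_add: "add_subgroup S \<Longrightarrow> x \<in> S \<Longrightarrow> y \<in> S \<Longrightarrow> x + y \<in> S"
  using add_subgroup_diff[of S x "- y"] by (simp add: add_subgroup_uminus)

lemma add_subgroup_sum:
  "add_subgroup S \<Longrightarrow> (\<And>i. i \<in> I \<Longrightarrow> f i \<in> S) \<Longrightarrow> sum f I \<in> S"
  by (induction I rule: infinite_finite_induct) (auto simp: add_subgroup_0 add_subgroup_add)

lemma add_subgroup_scaleR_int:
  assumes "add_subgroup S" "x \<in> S" "k \<in> \<int>" shows "k *\<^sub>R x \<in> S"
proof -
  have nat: "real n *\<^sub>R x \<in> S" for n
    by (induction n) (auto simp: add_subgroup_0 add_subgroup_add assms algebra_simps)
  from \<open>k \<in> \<int>\<close> obtain n :: nat where "k = real n \<or> k = - real n"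
    by (metis Ints_cases int_cases2 of_int_minus of_int_of_nat_eq)
  then show ?thesis using nat[of n] add_subgroup_uminus[OF assms(1)] by auto
qed

definition zspan :: "'a::real_vector list \<Rightarrow> 'a set" where
  "zspan bs = {(\<Sum>i<length bs. of_int (c i) *\<^sub>R bs ! i) | c. True}"

lemma lattice_basis_iff: "lattice_basis L bs \<longleftrightarrow> distinct bs \<and> independent (set bs) \<and> L = zspan bs"
  unfolding lattice_basis_def zspan_def by simp

lemma zspan_Nil [simp]: "zspan [] = {0}"
  by (simp add: zspan_def)

lemma zspan_subset:
  assumes "add_subgroup S" "set bs \<subseteq> S" shows "zspan bs \<subseteq> S"
  using assms by (auto simp: zspan_def intro!: add_subgroup_sum add_subgroup_scaleR_int)

lemma mem_zspan_iff: "x \<in> zspan bs \<longleftrightarrow> (\<exists>c. x = (\<Sum>i<length bs. of_int (c i) *\<^sub>R bs ! i))"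
  by (auto simp: zspan_def)

lemma add_subgroup_zspan: "add_subgroup (zspan bs)"
  unfolding add_subgroup_def
proof (intro conjI ballI)
  show "0 \<in> zspan bs"
    unfolding mem_zspan_iff by (intro exI[of _ "\<lambda>_. 0"]) simp
next
  fix x y assume "x \<in> zspan bs" "y \<in> zspan bs"
  then obtain c d where "x = (\<Sum>i<length bs. of_int (c i) *\<^sub>R bs ! i)"
    "y = (\<Sum>i<length bs. of_int (d i) *\<^sub>R bs ! i)" by (auto simp: mem_zspan_iff)
  then have "x - y = (\<Sum>i<length bs. of_int (c i - d i) *\<^sub>R bs ! i)"
    by (simp add: sum_subtractf scaleR_diff_left)
  then show "x - y \<in> zspan bs"
    unfolding mem_zspan_iff by (intro exI[of _ "\<lambda>i. c i - d i"])
qed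

lemma set_subset_zspan: "set bs \<subseteq> zspan bs"
proof
  fix x assume "x \<in> set bs"
  then obtain i where i: "i < length bs" "x = bs ! i" by (auto simp: in_set_conv_nth)
  then have "x = (\<Sum>j<length bs. of_int (if j = i then 1 else 0) *\<^sub>R bs ! j)"
    by (simp add: if_distrib[of "\<lambda>c. of_int c *\<^sub>R _"] cong: if_cong)
  then show "x \<in> zspan bs"
    unfolding mem_zspan_iff by (intro exI[of _ "\<lambda>j. if j = i then 1 else 0"])
qed

lemma span_zspan: "span (zspan bs) = span (set bs)"
proof -
  have "zspan bs \<subseteq> span (set bs)"
    by (auto simp: zspan_def intro!: span_sum span_scale intro: span_base)
  then show ?thesis
    using set_subset_zspan[of bs] by (metis span_mono span_span subset_antisym)
qed

definition integral_mat :: "real Matrix.mat \<Rightarrow> bool" where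
  "integral_mat T \<longleftrightarrow> (\<forall>i<dim_row T. \<forall>j<dim_col T. T $$ (i, j) \<in> \<int>)"

lemma zspan_lincombs_exists:
  assumes "set us \<subseteq> zspan cs"
  obtains T where "T \<in> carrier_mat (length us) (length cs)" "integral_mat T" "lincombs T cs = us"
proof -
  have "\<exists>c. us ! i = (\<Sum>j<length cs. of_int (c j) *\<^sub>R cs ! j)" if "i < length us" for i
    using assms nth_mem[OF that] mem_zspan_iff by blast
  then obtain c where c: "\<And>i. i < length us \<Longrightarrow> us ! i = (\<Sum>j<length cs. of_int (c i j) *\<^sub>R cs ! j)"
    by metis
  define T where "T = Matrix.mat (length us) (length cs) (\<lambda>(i, j). real_of_int (c i j))"
  have "T \<in> carrier_mat (length us) (length cs)" "integral_mat T"
    by (auto simp: T_def integral_mat_def)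
  moreover have "lincombs T cs = us"
    by (rule nth_equalityI) (simp_all add: T_def nth_lincombs c)
  ultimately show thesis using that by blast
qed

lemma lincombs_subset_add_subgroup:
  assumes "add_subgroup S" "set bs \<subseteq> S" "integral_mat T" "dim_col T = length bs"
  shows "set (lincombs T bs) \<subseteq> S"
  using assms by (auto simp: lincombs_def integral_mat_def
      intro!: add_subgroup_sum add_subgroup_scaleR_int)

lemma independent_list_coeffs_eq_0:
  fixes bs :: "'a::real_vector list"
  assumes "distinct bs" "independent (set bs)"
    and "(\<Sum>j<length bs. c j *\<^sub>R bs ! j) = 0" "i < length bs"
  shows "c i = 0"
proof -
  have inj: "inj_on ((!) bs) {..<length bs}"
    using assms(1) by (simp add: inj_on_def nth_eq_iff_index_eq)
  have set_bs: "set bs = (!) bs ` {..<length bs}"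
    using set_take_eq_image_nth[of "length bs" bs] by simp
  define u where "u v = c (the_inv_into {..<length bs} ((!) bs) v)" for v
  have u: "u (bs ! j) = c j" if "j < length bs" for j
    using that inj by (simp add: u_def the_inv_into_f_f)
  have "(\<Sum>v\<in>set bs. u v *\<^sub>R v) = (\<Sum>j<length bs. u (bs ! j) *\<^sub>R bs ! j)"
    unfolding set_bs by (rule sum.reindex[OF inj, unfolded comp_def])
  also have "\<dots> = 0" using assms(3) u by simp
  finally have "u (bs ! i) = 0"
    using assms(2,4) unfolding dependent_explicit by auto
  then show ?thesis using u[OF assms(4)] by simp
qed

lemma lincombs_eq_imp_eq:
  fixes bs :: "'a::real_vector list"
  assumes "distinct bs" "independent (set bs)"
    and A: "A \<in> carrier_mat m (length bs)" and B: "B \<in> carrier_mat m (length bs)"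
    and eq: "lincombs A bs = lincombs B bs"
  shows "A = B"
proof (rule eq_matI)
  fix i j assume "i < dim_row B" "j < dim_col B"
  then have i: "i < m" and j: "j < length bs" using B by auto
  have "(\<Sum>j<length bs. (A $$ (i, j) - B $$ (i, j)) *\<^sub>R bs ! j) = lincombs A bs ! i - lincombs B bs ! i"
    using i A B by (simp add: nth_lincombs scaleR_diff_left sum_subtractf)
  then show "A $$ (i, j) = B $$ (i, j)"
    using independent_list_coeffs_eq_0[OF assms(1,2) _ j, of "\<lambda>j. A $$ (i, j) - B $$ (i, j)"] eq
    by simp
qed (use A B in auto)

lemma lincombs_one: "lincombs (1\<^sub>m (length bs)) bs = bs"
  by (rule nth_equalityI) (simp_all add: nth_lincombs if_distrib[of "\<lambda>c. c *\<^sub>R _"] cong: if_cong)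

lemma length_lattice_basis:
  assumes "lattice_basis S bs" shows "length bs = dim (span S)"
  using assms span_zspan[of bs] dim_eq_card_independent[of "set bs"] distinct_card[of bs]
  by (simp add: lattice_basis_iff)

lemma det_integral_mat:
  assumes A: "A \<in> carrier_mat n n" and "integral_mat A" shows "Determinant.det A \<in> \<int>"
proof -
  have "A $$ (i, j) \<in> \<int>" if "i < n" "j < n" for i j
    using assms that by (auto simp: integral_mat_def)
  with A show ?thesis
    unfolding Determinant.det_def
    by (auto intro!: Ints_sum[OF Ints_mult[OF Ints_of_int Ints_prod]] simp: permutes_def)
qed

text \<open>Two bases of the same lattice differ by integral matrices inverse to each other, so the
  transition matrix has determinant \<open>\<plusminus>1\<close>.\<close>

lemma gram_det_lattice_basis_unique:
  fixes bs cs :: "'a::euclidean_space list"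
  assumes B: "lattice_basis S bs" and C: "lattice_basis S cs"
  shows "gram_det cs = gram_det bs"
proof -
  define n where "n = length bs"
  have lc: "length cs = n"
    using length_lattice_basis[OF B] length_lattice_basis[OF C] by (simp add: n_def)
  have "S = zspan bs" "S = zspan cs" and indep: "distinct bs" "independent (set bs)"
    using B C by (auto simp: lattice_basis_iff)
  then have "set cs \<subseteq> zspan bs" "set bs \<subseteq> zspan cs" using set_subset_zspan by auto
  then obtain U W where U: "U \<in> carrier_mat n n" "integral_mat U" "lincombs U bs = cs"
    and W: "W \<in> carrier_mat n n" "integral_mat W" "lincombs W cs = bs"
    unfolding n_def lc[symmetric] by (metis zspan_lincombs_exists lc n_def)
  have "lincombs (W * U) bs = lincombs (1\<^sub>m n) bs"
    using lincombs_mult[OF W(1) U(1), of bs] U(3) W(3) lincombs_one[of bs] by (simp add: n_def)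
  moreover have "W * U \<in> carrier_mat n (length bs)" "1\<^sub>m n \<in> carrier_mat n (length bs)"
    using W(1) U(1) by (auto simp: n_def)
  ultimately have "W * U = 1\<^sub>m n"
    using lincombs_eq_imp_eq[OF indep] by blast
  then have "Determinant.det W * Determinant.det U = 1"
    using det_mult[OF W(1) U(1)] by simp
  moreover obtain a b where "Determinant.det W = of_int a" "Determinant.det U = of_int b"
    using det_integral_mat[OF W(1,2)] det_integral_mat[OF U(1,2)] by (auto elim!: Ints_cases)
  ultimately have "a * b = 1"
    by (metis of_int_eq_1_iff of_int_mult)
  then have "b = 1 \<or> b = -1"
    by (auto simp: zmult_eq_1_iff)
  then have "(Determinant.det U)\<^sup>2 = 1"
    using \<open>Determinant.det U = of_int b\<close> by auto
  then show ?thesis using gram_det_lincombs[OF U(1), of bs] U(3) n_def by simp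
qed

lemma covol_lattice_basis:
  assumes "lattice_basis S bs" shows "covol S = sqrt (gram_det bs)"
proof -
  have "lattice_basis S (SOME bs. lattice_basis S bs)" using assms by (rule someI)
  then show ?thesis unfolding covol_def using gram_det_lattice_basis_unique[OF assms] by simp
qed

section \<open>Bases of discrete subgroups\<close>

lemma euclidean_lattice_min_norm:
  assumes "euclidean_lattice L" obtains e where "e > 0" "\<forall>x\<in>L. x \<noteq> 0 \<longrightarrow> e \<le> norm x"
proof -
  have "0 \<in> L" using assms by (simp add: euclidean_lattice_def add_subgroup_0)
  then obtain e where "e > 0" "\<forall>y\<in>L. dist y 0 < e \<longrightarrow> y = 0"
    using assms unfolding euclidean_lattice_def discrete_set_def by blast
  then show thesis using that[of e] by force
qed

lemma finite_add_subgroup_inter_cball: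
  fixes S :: "'a::euclidean_space set"
  assumes S: "add_subgroup S" and e: "e > 0" "\<forall>x\<in>S. x \<noteq> 0 \<longrightarrow> e \<le> norm x"
  shows "finite (S \<inter> cball 0 R)"
proof (rule ccontr)
  let ?T = "S \<inter> cball 0 R"
  assume "infinite ?T"
  then obtain x where x: "x islimpt ?T"
    using bounded_infinite_imp_islimpt[OF order.refl] by (meson bounded_Int bounded_cball)
  then obtain y where y: "y \<in> ?T" "y \<noteq> x" "dist y x < e / 2"
    using e unfolding islimpt_approachable by (meson half_gt_zero)
  then obtain z where z: "z \<in> ?T" "z \<noteq> x" "dist z x < dist y x"
    using x unfolding islimpt_approachable by (metis zero_less_dist_iff)
  have "y - z \<in> S" "y - z \<noteq> 0" using y z S by (auto intro: add_subgroup_diff)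
  moreover have "norm (y - z) < e"
    using y z dist_triangle[of y z x] by (simp add: dist_norm norm_minus_commute)
  ultimately show False using e by force
qed

definition shortest_vector :: "'a::real_normed_vector set \<Rightarrow> 'a \<Rightarrow> bool" where
  "shortest_vector S v \<longleftrightarrow> v \<in> S \<and> v \<noteq> 0 \<and> (\<forall>x\<in>S. x \<noteq> 0 \<longrightarrow> norm v \<le> norm x)"

lemma shortest_vector_exists:
  fixes S :: "'a::euclidean_space set"
  assumes S: "add_subgroup S" and e: "e > 0" "\<forall>x\<in>S. x \<noteq> 0 \<longrightarrow> e \<le> norm x"
    and x0: "x0 \<in> S" "x0 \<noteq> 0"
  obtains v where "shortest_vector S v"
proof -
  define F where "F = S \<inter> cball 0 (norm x0) - {0}"
  have fin: "finite F" unfolding F_def using finite_add_subgroup_inter_cball[OF S e] by blast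
  have "x0 \<in> F" using x0 by (simp add: F_def)
  then obtain v where v: "v \<in> F" "norm v = Min (norm ` F)"
    using Min_in[of "norm ` F"] fin by fastforce
  have min: "norm v \<le> norm x" if "x \<in> F" for x
    using that v fin by simp
  have "norm v \<le> norm x" if "x \<in> S" "x \<noteq> 0" for x
    using that min[of x] min[OF \<open>x0 \<in> F\<close>] by (cases "norm x \<le> norm x0") (auto simp: F_def)
  moreover have "v \<in> S" "v \<noteq> 0" using v by (auto simp: F_def)
  ultimately show thesis using that by (auto simp: shortest_vector_def)
qed

definition proj_perp :: "'a::real_inner \<Rightarrow> 'a \<Rightarrow> 'a" where
  "proj_perp v x = x - (inner x v / inner v v) *\<^sub>R v"

lemma linear_proj_perp: "linear (proj_perp v)"
  by (rule linearI) (simp_all add: proj_perp_def add_divide_distrib algebra_simps)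

lemma inner_proj_perp: "inner (proj_perp v x) v = 0"
  by (cases "v = 0") (simp_all add: proj_perp_def inner_diff_left)

lemma proj_perp_self: "proj_perp v v = 0"
  by (cases "v = 0") (simp_all add: proj_perp_def)

lemma proj_perp_idem: "proj_perp v (proj_perp v x) = proj_perp v x"
  using inner_proj_perp[of v x] by (simp add: proj_perp_def)

lemma add_subgroup_linear_image:
  assumes "add_subgroup S" "linear f" shows "add_subgroup (f ` S)"
  unfolding add_subgroup_def
proof (intro conjI ballI)
  show "0 \<in> f ` S" using assms linear_0[of f] add_subgroup_0[of S] by force
  fix x y assume "x \<in> f ` S" "y \<in> f ` S"
  then obtain a b where "a \<in> S" "b \<in> S" "x = f a" "y = f b" by blast
  then have "a - b \<in> S" "x - y = f (a - b)"
    using assms by (simp_all add: add_subgroup_diff linear_diff)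
  then show "x - y \<in> f ` S" by blast
qed

text \<open>Projecting away a shortest vector \<open>v\<close> shrinks the minimum by at most the factor \<open>\<surd>3/2\<close>:
  a preimage of \<open>proj_perp v s\<close> can be shifted by an integral multiple of \<open>v\<close> to have its
  \<open>v\<close>-component at most \<open>|v|/2\<close>.\<close>

lemma norm_proj_perp_shortest_vector:
  assumes S: "add_subgroup S" and v: "shortest_vector S v"
    and s: "s \<in> S" and ps: "proj_perp v s \<noteq> 0"
  shows "sqrt 3 / 2 * norm v \<le> norm (proj_perp v s)"
proof -
  define t where "t = inner s v / inner v v"
  define d where "d = t - of_int (round t)"
  define s' where "s' = s - of_int (round t) *\<^sub>R v"
  have "v \<in> S" using v by (simp add: shortest_vector_def)
  then have "s' \<in> S" unfolding s'_def using S s by (simp add: add_subgroup_diff add_subgroup_scaleR_int)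
  have s'_eq: "s' = proj_perp v s + d *\<^sub>R v"
    by (simp add: s'_def d_def t_def proj_perp_def algebra_simps)
  have "proj_perp v s' = proj_perp v s"
    unfolding s'_eq by (simp add: linear_add[OF linear_proj_perp] linear_cmul[OF linear_proj_perp]
        proj_perp_self proj_perp_idem)
  then have "s' \<noteq> 0" using ps by (auto simp: proj_perp_def)
  then have "norm v \<le> norm s'" using v \<open>s' \<in> S\<close> by (simp add: shortest_vector_def)
  then have "(norm v)\<^sup>2 \<le> (norm s')\<^sup>2" by (simp add: power_mono)
  also have "\<dots> = (norm (proj_perp v s))\<^sup>2 + d\<^sup>2 * (norm v)\<^sup>2"
    unfolding s'_eq using inner_proj_perp[of v s]
    by (subst norm_add_Pythagorean) (simp_all add: Linear_Algebra.orthogonal_def power_mult_distrib)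
  also have "\<dots> \<le> (norm (proj_perp v s))\<^sup>2 + 1 / 4 * (norm v)\<^sup>2"
  proof -
    have "\<bar>d\<bar> \<le> \<bar>1 / 2\<bar>" using of_int_round_abs_le[of t] by (simp add: d_def abs_minus_commute)
    then have "d\<^sup>2 \<le> (1 / 2)\<^sup>2" by (simp only: abs_le_square_iff)
    then have "d\<^sup>2 \<le> 1 / 4" by (simp add: power_divide)
    then show ?thesis by (intro add_left_mono mult_right_mono) simp_all
  qed
  finally have "(sqrt 3 / 2 * norm v)\<^sup>2 \<le> (norm (proj_perp v s))\<^sup>2"
    by (simp add: power_mult_distrib power_divide)
  then show ?thesis by (rule power2_le_imp_le) simp
qed

lemma shortest_vector_multiple:
  assumes S: "add_subgroup S" and v: "shortest_vector S v"
    and w: "w \<in> S" and pw: "proj_perp v w = 0"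
  shows "\<exists>m. w = of_int m *\<^sub>R v"
proof -
  define t where "t = inner w v / inner v v"
  have w_eq: "w = t *\<^sub>R v" using pw by (simp add: proj_perp_def t_def)
  have "v \<in> S" "v \<noteq> 0" using v by (auto simp: shortest_vector_def)
  define f where "f = t - of_int \<lfloor>t\<rfloor>"
  have f: "0 \<le> f" "f < 1" unfolding f_def by linarith+
  have "f *\<^sub>R v = w - of_int \<lfloor>t\<rfloor> *\<^sub>R v" by (simp add: w_eq f_def scaleR_diff_left)
  then have "f *\<^sub>R v \<in> S"
    using S w \<open>v \<in> S\<close> by (simp add: add_subgroup_diff add_subgroup_scaleR_int)
  moreover have "norm (f *\<^sub>R v) < norm v" using f \<open>v \<noteq> 0\<close> by simp
  ultimately have "f *\<^sub>R v = 0" using v by (force simp: shortest_vector_def)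
  then have "f = 0" using \<open>v \<noteq> 0\<close> by simp
  then show ?thesis using w_eq by (auto simp: f_def)
qed

lemma span_insert_proj_perp:
  assumes "v \<in> S" shows "span S = span (insert v (proj_perp v ` S))"
proof -
  have "x \<in> span (insert v (proj_perp v ` S))" if "x \<in> S" for x
  proof -
    have "proj_perp v x \<in> span (insert v (proj_perp v ` S))"
      "(inner x v / inner v v) *\<^sub>R v \<in> span (insert v (proj_perp v ` S))"
      using that by (auto intro: span_base span_scale)
    from span_add[OF this] show ?thesis by (simp add: proj_perp_def)
  qed
  moreover have "proj_perp v x \<in> span S" if "x \<in> S" for x
    using that assms by (simp add: proj_perp_def span_diff span_scale span_base)
  ultimately show ?thesis
    using assms unfolding span_eq by (auto intro: span_base)
qed

lemma gram_schmidt_in_span_set: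
  assumes "k < length bs" shows "gram_schmidt bs k \<in> span (set bs)"
  using gram_schmidt_in_span[OF assms] span_mono[OF set_take_subset] by blast

lemma gram_det_Cons_orthogonal:
  fixes cs :: "'a::euclidean_space list"
  assumes orth: "\<forall>w\<in>set cs. inner v w = 0"
  shows "gram_det (v # cs) = (norm v)\<^sup>2 * gram_det cs"
proof -
  let ?ds = "v # map (gram_schmidt cs) [0..<length cs]"
  have orth_v: "inner v (gram_schmidt cs j) = 0" if "j < length cs" for j
    using orthogonal_to_span[OF gram_schmidt_in_span_set[OF that], of v] orth
    by (auto simp: Linear_Algebra.orthogonal_def)
  have "gram_det (v # cs) = gram_det ?ds"
  proof (rule gram_det_unitriangular)
    fix k assume k: "k < length (v # cs)"
    show "(v # cs) ! k - ?ds ! k \<in> span (set (take k ?ds))"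
    proof (cases k)
      case (Suc j)
      then have "set (take k ?ds) = insert v (gram_schmidt cs ` {..<j})"
        using k by (simp add: take_map atLeast0LessThan min_def)
      moreover have "cs ! j - gram_schmidt cs j \<in> span (gram_schmidt cs ` {..<j})"
        using gram_schmidt_diff_in_span[of cs j] span_take_eq_span_gram_schmidt[of j cs] Suc k by simp
      ultimately show ?thesis using Suc k span_mono[OF subset_insertI] by auto
    qed (simp add: span_zero)
  qed simp
  also have "\<dots> = (\<Prod>k<Suc (length cs). (norm (?ds ! k))\<^sup>2)"
  proof (subst gram_det_pairwise_orthogonal)
    fix i j assume "i < length ?ds" "j < length ?ds" "i \<noteq> j"
    then show "inner (?ds ! i) (?ds ! j) = 0"
      using orth_v inner_gram_schmidt_eq_0[of _ cs]
      by (cases i; cases j) (auto simp: inner_commute)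
  qed simp
  also have "\<dots> = (norm v)\<^sup>2 * gram_det cs"
    by (subst prod.lessThan_Suc_shift) (simp add: gram_det_eq_prod_gram_schmidt)
  finally show ?thesis .
qed

lemma gram_det_Cons_proj_perp:
  fixes v :: "'a::euclidean_space"
  shows "gram_det (v # ls) = (norm v)\<^sup>2 * gram_det (map (proj_perp v) ls)"
proof -
  have "gram_det (v # ls) = gram_det (v # map (proj_perp v) ls)"
  proof (rule gram_det_unitriangular)
    fix k assume k: "k < length (v # ls)"
    show "(v # ls) ! k - (v # map (proj_perp v) ls) ! k \<in> span (set (take k (v # map (proj_perp v) ls)))"
    proof (cases k)
      case (Suc j)
      then have "(v # ls) ! k - (v # map (proj_perp v) ls) ! k = (inner (ls ! j) v / inner v v) *\<^sub>R v"
        using k by (simp add: proj_perp_def)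
      then show ?thesis using Suc by (simp add: span_base span_scale)
    qed (simp add: span_zero)
  qed simp
  also have "\<dots> = (norm v)\<^sup>2 * gram_det (map (proj_perp v) ls)"
    by (intro gram_det_Cons_orthogonal) (auto simp: inner_proj_perp inner_commute[of v])
  finally show ?thesis .
qed

lemma zspan_Cons_lift:
  fixes S :: "'a::euclidean_space set"
  assumes S: "add_subgroup S" and v: "shortest_vector S v"
    and ls: "set ls \<subseteq> S" "proj_perp v ` S = zspan (map (proj_perp v) ls)"
  shows "S = zspan (v # ls)"
proof
  have "v \<in> S" using v by (simp add: shortest_vector_def)
  then show "zspan (v # ls) \<subseteq> S" using zspan_subset[OF S] ls(1) by simp
  show "S \<subseteq> zspan (v # ls)"
  proof
    fix s assume s: "s \<in> S"
    then have "proj_perp v s \<in> zspan (map (proj_perp v) ls)" using ls(2) by blast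
    then obtain c where c: "proj_perp v s = (\<Sum>i<length ls. of_int (c i) *\<^sub>R proj_perp v (ls ! i))"
      unfolding mem_zspan_iff by auto
    define w where "w = s - (\<Sum>i<length ls. of_int (c i) *\<^sub>R ls ! i)"
    have "w \<in> S"
      unfolding w_def using S s ls(1)
      by (intro add_subgroup_diff add_subgroup_sum add_subgroup_scaleR_int) auto
    moreover have "proj_perp v w = 0"
      using c by (simp add: w_def linear_diff[OF linear_proj_perp] linear_sum[OF linear_proj_perp]
          linear_cmul[OF linear_proj_perp])
    ultimately obtain m where "w = of_int m *\<^sub>R v"
      using shortest_vector_multiple[OF S v] by blast
    then have "s = of_int m *\<^sub>R v + (\<Sum>i<length ls. of_int (c i) *\<^sub>R ls ! i)"
      by (simp add: w_def algebra_simps)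
    moreover have "set (v # ls) \<subseteq> zspan (v # ls)" by (rule set_subset_zspan)
    ultimately show "s \<in> zspan (v # ls)"
      using add_subgroup_zspan[of "v # ls"]
      by (auto intro!: add_subgroup_add add_subgroup_sum add_subgroup_scaleR_int)
  qed
qed

lemma lattice_basis_Cons_lift:
  fixes S :: "'a::euclidean_space set"
  assumes S: "add_subgroup S" and v: "shortest_vector S v"
    and ls: "set ls \<subseteq> S" "lattice_basis (proj_perp v ` S) (map (proj_perp v) ls)"
  shows "lattice_basis S (v # ls)"
proof -
  have "gram_det (map (proj_perp v) ls) > 0"
    using ls(2) gram_det_pos_iff[of "map (proj_perp v) ls"] unfolding lattice_basis_iff by blast
  moreover have "v \<noteq> 0" using v by (simp add: shortest_vector_def)
  ultimately have "gram_det (v # ls) > 0" by (simp add: gram_det_Cons_proj_perp)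
  then have "distinct (v # ls)" "independent (set (v # ls))"
    using gram_det_pos_iff[of "v # ls"] by auto
  moreover have "S = zspan (v # ls)"
    using zspan_Cons_lift[OF S v ls(1)] ls(2) by (simp add: lattice_basis_iff)
  ultimately show ?thesis by (simp add: lattice_basis_iff)
qed

fun hermite_factor :: "nat \<Rightarrow> real" where
  "hermite_factor 0 = 1"
| "hermite_factor (Suc r) = hermite_factor r * (3 / 4) ^ r"

lemma hermite_factor_pos: "hermite_factor r > 0"
  by (induction r) auto

lemma hermite_factor_Suc_bound:
  assumes "0 \<le> e" "e \<le> n" and g: "hermite_factor r * (sqrt 3 / 2 * n) ^ (2 * r) \<le> g"
  shows "hermite_factor (Suc r) * e ^ (2 * Suc r) \<le> n\<^sup>2 * g"
proof -
  have "hermite_factor (Suc r) * e ^ (2 * Suc r) \<le> hermite_factor (Suc r) * n ^ (2 * Suc r)"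
    using assms hermite_factor_pos[of "Suc r"] by (intro mult_left_mono power_mono) auto
  also have "\<dots> = n\<^sup>2 * (hermite_factor r * (3 / 4 * n\<^sup>2) ^ r)"
    by (simp only: hermite_factor.simps power_mult power_Suc power_mult_distrib mult_ac)
      (metis power_mult mult.commute)
  also have "(3 / 4 * n\<^sup>2) ^ r = (sqrt 3 / 2 * n) ^ (2 * r)"
    by (simp add: power_mult power_mult_distrib power_divide)
  also have "n\<^sup>2 * (hermite_factor r * \<dots>) \<le> n\<^sup>2 * g" using g by (simp add: mult_left_mono)
  finally show ?thesis .
qed

lemma lattice_basis_exists:
  fixes S :: "'a::euclidean_space set"
  assumes "add_subgroup S" "e > 0" "\<forall>x\<in>S. x \<noteq> 0 \<longrightarrow> e \<le> norm x"
  shows "\<exists>bs. lattice_basis S bs \<and>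
    hermite_factor (dim (span S)) * e ^ (2 * dim (span S)) \<le> gram_det bs"
  using assms
proof (induction "dim (span S)" arbitrary: S e)
  case 0
  then have "S \<subseteq> {0}" by simp
  then have "S = {0}" using add_subgroup_0[OF 0(2)] by blast
  then have "lattice_basis S []" by (simp add: lattice_basis_iff independent_empty)
  then show ?case unfolding 0(1)[symmetric] by (auto simp: gram_det_eq_prod_gram_schmidt)
next
  case (Suc r)
  have "\<not> S \<subseteq> {0}" using Suc.hyps(2) by (metis dim_eq_0 dim_span nat.distinct(1))
  then obtain x0 where "x0 \<in> S" "x0 \<noteq> 0" by blast
  then obtain v where v: "shortest_vector S v"
    using shortest_vector_exists[OF Suc.prems] by blast
  then have "v \<in> S" "v \<noteq> 0" by (auto simp: shortest_vector_def)
  define S' where "S' = proj_perp v ` S"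
  have S': "add_subgroup S'"
    unfolding S'_def by (rule add_subgroup_linear_image[OF Suc.prems(1) linear_proj_perp])
  have e': "sqrt 3 / 2 * norm v > 0" using \<open>v \<noteq> 0\<close> by simp
  have min': "\<forall>y\<in>S'. y \<noteq> 0 \<longrightarrow> sqrt 3 / 2 * norm v \<le> norm y"
    using norm_proj_perp_shortest_vector[OF Suc.prems(1) v] by (auto simp: S'_def)
  have "Linear_Algebra.orthogonal v y" if "y \<in> span S'" for y
    using that by (rule orthogonal_to_span)
      (auto simp: S'_def Linear_Algebra.orthogonal_def inner_proj_perp inner_commute[of v])
  then have "v \<notin> span S'" using \<open>v \<noteq> 0\<close> by (force simp: Linear_Algebra.orthogonal_def)
  then have "dim (span S) = Suc (dim (span S'))"
    using span_insert_proj_perp[OF \<open>v \<in> S\<close>] by (simp add: S'_def dim_insert)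
  then obtain cs where cs: "lattice_basis (proj_perp v ` S) cs"
    and bound: "hermite_factor r * (sqrt 3 / 2 * norm v) ^ (2 * r) \<le> gram_det cs"
    using Suc.hyps(1)[OF _ S' e' min'] Suc.hyps(2) by (auto simp: S'_def)
  then have "cs \<in> lists (proj_perp v ` S)"
    using set_subset_zspan[of cs] by (auto simp: lattice_basis_iff)
  then obtain ls where ls: "set ls \<subseteq> S" "map (proj_perp v) ls = cs"
    unfolding lists_image by auto
  have "norm v \<ge> e" "e > 0" using Suc.prems v by (auto simp: shortest_vector_def)
  then have "hermite_factor (Suc r) * e ^ (2 * Suc r) \<le> gram_det (v # ls)"
    unfolding gram_det_Cons_proj_perp ls(2) by (intro hermite_factor_Suc_bound[OF _ _ bound]) simp_all
  moreover have "lattice_basis S (v # ls)"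
    using lattice_basis_Cons_lift[OF Suc.prems(1) v ls(1)] cs ls(2) by simp
  ultimately show ?case unfolding Suc.hyps(2)[symmetric] by blast
qed

section \<open>Slopes\<close>

lemma divide_of_nat_le_max_0: "x / real n \<le> max 0 x"
proof (cases "x \<le> 0 \<or> n = 0")
  case False
  then have "x / real n \<le> x / 1" by (intro divide_left_mono) auto
  then show ?thesis by simp
qed (auto simp: divide_nonpos_nonneg)

lemma slope_bdd_above:
  fixes L :: "'a::euclidean_space set"
  assumes "euclidean_lattice L"
  shows "bdd_above {slope S | S. sublattice S L \<and> S \<noteq> {0}}"
proof -
  obtain e where e: "e > 0" "\<forall>x\<in>L. x \<noteq> 0 \<longrightarrow> e \<le> norm x"
    using euclidean_lattice_min_norm[OF assms] by blast
  define m where "m r = hermite_factor r * e ^ (2 * r)" for r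
  define B where "B = (\<Sum>r\<le>DIM('a). \<bar>ln (sqrt (m r))\<bar>)"
  have "slope S \<le> B" if S: "sublattice S L" for S
  proof -
    define r where "r = dim (span S)"
    have "add_subgroup S" "\<forall>x\<in>S. x \<noteq> 0 \<longrightarrow> e \<le> norm x"
      using S e(2) by (auto simp: sublattice_def)
    then obtain bs where bs: "lattice_basis S bs" "m r \<le> gram_det bs"
      using lattice_basis_exists[OF _ e(1)] by (auto simp: m_def r_def)
    have "m r > 0" using e(1) hermite_factor_pos by (simp add: m_def)
    then have "ln (sqrt (m r)) \<le> ln (covol S)"
      using bs by (simp add: covol_lattice_basis)
    moreover have "\<bar>ln (sqrt (m r))\<bar> \<le> B"
      unfolding B_def using dim_subset_UNIV[of "span S"]
      by (intro member_le_sum) (auto simp: r_def)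
    ultimately have "deg S \<le> B" by (simp add: deg_def)
    moreover have "B \<ge> 0" by (simp add: B_def sum_nonneg)
    ultimately show "slope S \<le> B"
      using divide_of_nat_le_max_0[of "deg S" "rk S"] by (simp add: slope_def)
  qed
  then show ?thesis by (auto simp: bdd_above_def)
qed

lemma slope_le_mu_max:
  assumes "euclidean_lattice L" "sublattice S L" "S \<noteq> {0}"
  shows "slope S \<le> mu_max L"
  unfolding mu_max_def using assms slope_bdd_above[OF assms(1)] by (auto intro: cSup_upper)

lemma gram_det_ge_exp_mu_max:
  fixes L :: "'a::euclidean_space set"
  assumes L: "euclidean_lattice L" and bs: "distinct bs" "independent (set bs)" "set bs \<subseteq> L"
  shows "gram_det bs \<ge> exp (- 2 * real (length bs) * mu_max L)"
proof (cases "bs = []")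
  case False
  define S where "S = zspan bs"
  have basis: "lattice_basis S bs" using bs by (simp add: lattice_basis_iff S_def)
  have "sublattice S L"
    using L bs(3) zspan_subset add_subgroup_zspan
    by (auto simp: sublattice_def S_def euclidean_lattice_def)
  moreover have "S \<noteq> {0}"
    using set_subset_zspan[of bs] bs(2) False dependent_zero[of "set bs"]
    by (auto simp: S_def neq_Nil_conv)
  ultimately have "slope S \<le> mu_max L" by (rule slope_le_mu_max[OF L])
  moreover have "rk S = length bs" using length_lattice_basis[OF basis] by (simp add: rk_def)
  ultimately have "- mu_max L \<le> ln (sqrt (gram_det bs)) / real (length bs)"
    by (simp add: slope_def deg_def covol_lattice_basis[OF basis])
  then have "- mu_max L * real (length bs) \<le> ln (sqrt (gram_det bs))"
    using False by (simp add: pos_le_divide_eq)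
  moreover have g: "gram_det bs > 0" using bs gram_det_pos_iff by blast
  ultimately have "- 2 * real (length bs) * mu_max L \<le> ln (gram_det bs)"
    by (simp add: ln_sqrt mult_ac)
  then show ?thesis using g by (simp add: ln_ge_iff)
qed (simp add: gram_det_eq_prod_gram_schmidt)

section \<open>Tensors\<close>

lemma inner_tensor: "inner (tensor a b) (tensor c d) = inner a c * inner b d"
  unfolding tensor_def inner_vec_def by (simp add: sum_product mult_ac) (rule sum.swap)

lemma bilinear_tensor: "bilinear tensor"
  unfolding bilinear_def tensor_def
  by (auto intro!: linearI simp: Finite_Cartesian_Product.vec_eq_iff algebra_simps)

lemma bilinear_swap: "bilinear f \<Longrightarrow> bilinear (\<lambda>x y. f y x)"
  by (simp add: bilinear_def)

lemma bilinear_sum_left: "bilinear f \<Longrightarrow> f (sum g I) y = (\<Sum>i\<in>I. f (g i) y)"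
  unfolding bilinear_def using linear_sum[of "\<lambda>x. f x y"] by blast

lemma bilinear_sum_right: "bilinear f \<Longrightarrow> f x (sum g I) = (\<Sum>i\<in>I. f x (g i))"
  unfolding bilinear_def using linear_sum[of "\<lambda>y. f x y"] by blast

lemma sum_bilinear_lincombs:
  assumes f: "bilinear f" and T: "T \<in> carrier_mat l r" and "length ds = r" "length es = l"
  shows "(\<Sum>k<l. f (lincombs T ds ! k) (es ! k)) = (\<Sum>j<r. f (ds ! j) (lincombs (transpose_mat T) es ! j))"
proof -
  have "(\<Sum>k<l. f (lincombs T ds ! k) (es ! k)) = (\<Sum>k<l. \<Sum>j<r. T $$ (k, j) *\<^sub>R f (ds ! j) (es ! k))"
    using assms by (simp add: nth_lincombs bilinear_sum_left bilinear_lmul)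
  also have "\<dots> = (\<Sum>j<r. \<Sum>k<l. T $$ (k, j) *\<^sub>R f (ds ! j) (es ! k))"
    by (rule sum.swap)
  also have "\<dots> = (\<Sum>j<r. f (ds ! j) (lincombs (transpose_mat T) es ! j))"
    using assms by (simp add: nth_lincombs bilinear_sum_right bilinear_rmul)
  finally show ?thesis .
qed

lemma dim_span_lt_length:
  fixes bs :: "'a::euclidean_space list"
  assumes "\<not> (distinct bs \<and> independent (set bs))"
  shows "dim (span (set bs)) < length bs"
proof (rule ccontr)
  assume "\<not> dim (span (set bs)) < length bs"
  moreover have "dim (set bs) \<le> card (set bs)" by (rule dim_le_card) (auto intro: span_base)
  moreover have "card (set bs) \<le> length bs" by (rule card_length)
  ultimately have "card (set bs) = length bs" "dim (set bs) = card (set bs)" by simp_all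
  then show False
    using assms card_distinct card_eq_dim[of "set bs" "set bs"] by (auto intro: span_base)
qed

text \<open>The dependent left factors are rewritten through a basis of the lattice they generate.\<close>

lemma bilinear_sum_shorten:
  fixes L :: "'a::euclidean_space set"
  assumes f: "bilinear f" and L: "euclidean_lattice L" and M: "add_subgroup M"
    and u: "\<forall>k<l. u k \<in> L \<and> u' k \<in> M"
    and dep: "\<not> (distinct (map u [0..<l]) \<and> independent (set (map u [0..<l])))"
  shows "\<exists>l'<l. \<exists>v v'. (\<forall>k<l'. v k \<in> L \<and> v' k \<in> M) \<and>
    (\<Sum>k<l. f (u k) (u' k)) = (\<Sum>k<l'. f (v k) (v' k))"
proof -
  define us where "us = map u [0..<l]"
  define us' where "us' = map u' [0..<l]"
  obtain e where e: "e > 0" "\<forall>x\<in>L. x \<noteq> 0 \<longrightarrow> e \<le> norm x"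
    using euclidean_lattice_min_norm[OF L] by blast
  have "add_subgroup L" using L by (simp add: euclidean_lattice_def)
  then have NL: "zspan us \<subseteq> L" using u by (intro zspan_subset) (auto simp: us_def)
  then obtain cs where cs: "lattice_basis (zspan us) cs"
    using lattice_basis_exists[OF add_subgroup_zspan e(1)] e(2) by blast
  have r: "length cs < l"
    using length_lattice_basis[OF cs] dim_span_lt_length[OF dep] by (simp add: span_zspan us_def)
  have "set us \<subseteq> zspan cs" using cs set_subset_zspan by (auto simp: lattice_basis_iff)
  then obtain T where T: "T \<in> carrier_mat l (length cs)" "integral_mat T" "lincombs T cs = us"
    using zspan_lincombs_exists by (metis length_map diff_zero length_upt us_def)
  define vs' where "vs' = lincombs (transpose_mat T) us'"
  have "(\<Sum>k<l. f (u k) (u' k)) = (\<Sum>k<l. f (lincombs T cs ! k) (us' ! k))"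
    using T(3) by (simp add: us_def us'_def)
  also have "\<dots> = (\<Sum>j<length cs. f (cs ! j) (vs' ! j))"
    unfolding vs'_def by (rule sum_bilinear_lincombs[OF f T(1)]) (simp_all add: us'_def)
  finally have eq: "(\<Sum>k<l. f (u k) (u' k)) = (\<Sum>j<length cs. f (cs ! j) (vs' ! j))" .
  have "set cs \<subseteq> L" using cs NL set_subset_zspan by (auto simp: lattice_basis_iff)
  moreover have "set vs' \<subseteq> M"
    unfolding vs'_def using M u T(1,2)
    by (intro lincombs_subset_add_subgroup) (auto simp: integral_mat_def us'_def)
  moreover have "length vs' = length cs" using T(1) by (simp add: vs'_def)
  ultimately show ?thesis
    using r eq by (intro exI[of _ "length cs"] conjI exI[of _ "(!) cs"] exI[of _ "(!) vs'"]) auto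
qed

lemma card_le_sum_if_prod_ge_1:
  fixes x :: "'b \<Rightarrow> real"
  assumes "finite I" "\<And>i. i \<in> I \<Longrightarrow> x i \<ge> 0" "(\<Prod>i\<in>I. x i) \<ge> 1"
  shows "real (card I) \<le> (\<Sum>i\<in>I. x i)"
proof -
  have pos: "x i > 0" if "i \<in> I" for i
  proof -
    have "x i \<noteq> 0" using prod_zero_iff[OF assms(1), of x] assms(3) that by force
    then show ?thesis using assms(2)[OF that] by simp
  qed
  have "0 \<le> ln (\<Prod>i\<in>I. x i)" using assms(3) by simp
  also have "\<dots> = (\<Sum>i\<in>I. ln (x i))" by (intro ln_prod) (use assms(1) in \<open>auto dest: pos\<close>)
  also have "\<dots> \<le> (\<Sum>i\<in>I. x i - 1)" using pos by (intro sum_mono ln_le_minus_one) auto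
  finally show ?thesis by (simp add: sum_subtractf)
qed

lemma norm_sum_tensor_orthogonal:
  fixes l :: nat
  assumes "\<And>i j. i < l \<Longrightarrow> j < l \<Longrightarrow> i \<noteq> j \<Longrightarrow> inner (g i) (g j) = 0"
  shows "(norm (\<Sum>i<l. tensor (g i) (w i)))\<^sup>2 = (\<Sum>i<l. (norm (g i))\<^sup>2 * (norm (w i))\<^sup>2)"
proof -
  have "(norm (\<Sum>i<l. tensor (g i) (w i)))\<^sup>2 =
      (\<Sum>i<l. \<Sum>j<l. inner (tensor (g i) (w i)) (tensor (g j) (w j)))"
    unfolding power2_norm_eq_inner inner_sum_left by (simp only: inner_sum_right)
  also have "\<dots> = (\<Sum>i<l. \<Sum>j<l. inner (g i) (g j) * inner (w i) (w j))"
    by (simp only: inner_tensor)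
  also have "\<dots> = (\<Sum>i<l. \<Sum>j<l. if j = i then inner (g i) (g i) * inner (w i) (w i) else 0)"
    using assms by (intro sum.cong refl) auto
  also have "\<dots> = (\<Sum>i<l. (norm (g i))\<^sup>2 * (norm (w i))\<^sup>2)"
    by (intro sum.cong refl) (simp add: power2_norm_eq_inner)
  finally show ?thesis .
qed

lemma length_le_norm_sum_tensor:
  fixes bs :: "(real^'n) list" and bs' :: "(real^'m) list"
  assumes len: "length bs = l" "length bs' = l" and g: "1 \<le> gram_det bs * gram_det bs'"
  shows "real l \<le> (norm (\<Sum>k<l. tensor (bs ! k) (bs' ! k)))\<^sup>2"
proof -
  let ?g = "map (gram_schmidt bs) [0..<l]"
  obtain T where T: "T \<in> carrier_mat l l" "Determinant.det T = 1" "lincombs T ?g = bs"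
    using gram_schmidt_unitriangular[of bs] len(1) by metis
  define ws where "ws = lincombs (transpose_mat T) bs'"
  have "(\<Sum>k<l. tensor (bs ! k) (bs' ! k)) = (\<Sum>i<l. tensor (?g ! i) (ws ! i))"
    using sum_bilinear_lincombs[OF bilinear_tensor T(1), of ?g bs'] T(3) len by (simp add: ws_def)
  then have norm_sq: "(norm (\<Sum>k<l. tensor (bs ! k) (bs' ! k)))\<^sup>2 =
      (\<Sum>i<l. (norm (?g ! i))\<^sup>2 * (norm (ws ! i))\<^sup>2)"
    using norm_sum_tensor_orthogonal[of l "(!) ?g"] inner_gram_schmidt_eq_0[of _ bs] len(1) by simp
  have "gram_det bs' = gram_det ws"
    using gram_det_lincombs[of "transpose_mat T" l bs'] T(1,2) len(2) by (simp add: ws_def det_transpose)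
  also have "\<dots> \<le> (\<Prod>i<l. (norm (ws ! i))\<^sup>2)"
    using gram_det_le_prod_norm[of ws] T(1) by (simp add: ws_def)
  finally have "gram_det bs * gram_det bs' \<le> gram_det bs * (\<Prod>i<l. (norm (ws ! i))\<^sup>2)"
    using gram_det_nonneg[of bs] by (rule mult_left_mono)
  then have "1 \<le> (\<Prod>i<l. (norm (?g ! i))\<^sup>2) * (\<Prod>i<l. (norm (ws ! i))\<^sup>2)"
    using g gram_det_eq_prod_gram_schmidt[of bs] len(1) by simp
  then have "real (card {..<l}) \<le> (\<Sum>i<l. (norm (?g ! i))\<^sup>2 * (norm (ws ! i))\<^sup>2)"
    by (intro card_le_sum_if_prod_ge_1) (simp_all add: prod.distrib)
  then show ?thesis using norm_sq by simp
qed

lemma minimal_tensor_representation: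
  fixes L :: "(real^'n) set" and M :: "(real^'m) set"
  assumes L: "euclidean_lattice L" and M: "euclidean_lattice M" and "\<alpha> \<in> lattice_tensor L M"
  defines "l \<equiv> tensor_length L M \<alpha>"
  obtains us vs where "length us = l" "length vs = l" "set us \<subseteq> L" "set vs \<subseteq> M"
    "\<alpha> = (\<Sum>k<l. tensor (us ! k) (vs ! k))"
    "distinct us" "independent (set us)" "distinct vs" "independent (set vs)"
proof -
  let ?rep = "\<lambda>l::nat. \<exists>u u'. (\<forall>k<l. u k \<in> L \<and> u' k \<in> M) \<and> \<alpha> = (\<Sum>k<l. tensor (u k) (u' k))"
  have "\<exists>l. ?rep l" using assms(3) unfolding lattice_tensor_def mem_Collect_eq by blast
  then have "?rep l" unfolding l_def tensor_length_def by (rule LeastI_ex)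
  then obtain u u' where uu: "\<forall>k<l. u k \<in> L \<and> u' k \<in> M" and \<alpha>: "\<alpha> = (\<Sum>k<l. tensor (u k) (u' k))"
    by blast
  have minimal: "\<not> ?rep l'" if "l' < l" for l'
    using not_less_Least[of l' ?rep] that by (simp add: l_def tensor_length_def)
  have sg: "add_subgroup L" "add_subgroup M" using L M by (simp_all add: euclidean_lattice_def)
  have "distinct (map u [0..<l]) \<and> independent (set (map u [0..<l]))"
    and "distinct (map u' [0..<l]) \<and> independent (set (map u' [0..<l]))"
    using bilinear_sum_shorten[OF bilinear_tensor L sg(2) uu]
      bilinear_sum_shorten[OF bilinear_swap[OF bilinear_tensor] M sg(1), of l u' u] minimal \<alpha> uu
    by (metis (no_types, lifting))+
  moreover have "\<alpha> = (\<Sum>k<l. tensor (map u [0..<l] ! k) (map u' [0..<l] ! k))"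
    unfolding \<alpha> by (intro sum.cong refl) simp
  ultimately show thesis
    using uu by (intro that[of "map u [0..<l]" "map u' [0..<l]"]) auto
qed

theorem proposition1:
  fixes L :: "(real^'n) set" and M :: "(real^'m) set" and \<alpha> :: "real^'m^'n"
  assumes "euclidean_lattice L" and "euclidean_lattice M"
    and "mu_max L = 0" and "mu_max M = 0"
    and "\<alpha> \<in> lattice_tensor L M"
  shows "norm \<alpha> \<ge> sqrt (real (tensor_length L M \<alpha>))"
proof -
  define l where "l = tensor_length L M \<alpha>"
  obtain us vs where len: "length us = l" "length vs = l" and sub: "set us \<subseteq> L" "set vs \<subseteq> M"
    and \<alpha>: "\<alpha> = (\<Sum>k<l. tensor (us ! k) (vs ! k))"
    and indep: "distinct us" "independent (set us)" "distinct vs" "independent (set vs)"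
    using minimal_tensor_representation[OF assms(1,2,5)] unfolding l_def by blast
  have "1 \<le> gram_det us" "1 \<le> gram_det vs"
    using gram_det_ge_exp_mu_max[OF assms(1) indep(1,2) sub(1)]
      gram_det_ge_exp_mu_max[OF assms(2) indep(3,4) sub(2)] assms(3,4) by simp_all
  then have "1 \<le> gram_det us * gram_det vs" using mult_mono[of 1 _ 1] by fastforce
  then have "real l \<le> (norm \<alpha>)\<^sup>2" using length_le_norm_sum_tensor[OF len] \<alpha> by simp
  then show ?thesis unfolding l_def by (simp add: real_le_lsqrt)
qed

end
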